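(* Let $(S,* )$ be a finite cycle set of size $n$ and class $d$, with structure group $G$, germ $\overline G$, permutation group $\mathcal G$ and diagonal map $T$. Then: (i) the map $\psi\colon G\to\mathcal G$ factorizes through the projection $\pi\colon G\to\overline G$, i.e. there is a map $\phi\colon\overline G\to\mathcal G$ with $\psi=\phi\circ\pi$; (ii) $o(T)$ divides $d$, $d$ divides $|\mathcal G|$, and $|\mathcal G|$ divides $d^n$, where $o(T)$ is the order of the permutation $T$ of $S$.
   Context: A cycle set is a set $S$ with a binary operation $*$ such that each $t\mapsto s*t$ is bijective and $(s*t)*(s*u)=(t*s)*(t*u)$ for all $s,t,u$. Write $S=\{s_1,\dots,s_n\}$, let $\psi(s)\in\mathfrak S_n$ satisfy $s_i*s_j=s_{\psi(s_i)(j)}$, and $T(s)=s*s$ (a bijection of $S$ for finite cycle sets). The structure group $G$ has presentation $\langle S\mid s(s*t)=t(t*s),\ s\ne t\rangle$; $\psi$ extends to the anti-homomorphism $\psi\colon G\to\mathfrak S_n$ with $\psi(gh)=\psi(h)\circ\psi(g)$, whose image is the permutation group $\mathcal G=\langle\psi(s_1),\dots,\psi(s_n)\rangle$. With $\psi_k(s)=\psi(T^{k-1}(s))\circ\cdots\circ\psi(s)$, the class $d$ is the least $d\ge1$ with $\psi_d(s)=\mathrm{id}$ for all $s$. With $P_\sigma$ the matrix having $1$ at $(i,\sigma(i))$ and $\zeta_d=e^{2i\pi/d}$, the germ $\overline G$ is the subgroup of $GL_n(\mathbb C)$ generated by $\bar s_i=\mathrm{diag}(1,\dots,\zeta_d,\dots,1)P_{\psi(s_i)}$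 ($\zeta_d$ in position $i$), and $\pi\colon G\to\overline G$ is the surjective homomorphism $s_i\mapsto\bar s_i$. *)

theory Defs
  imports "HOL-Analysis.Analysis"
begin

text \<open>A finite cycle set: the underlying set is a finite type 'n, with operation op s t = s*t.
  We identify s_i with the element i of 'n, so psi(s) is just op s.\<close>

definition cycle_set :: "('n \<Rightarrow> 'n \<Rightarrow> 'n) \<Rightarrow> bool" where
  "cycle_set op \<longleftrightarrow> (\<forall>s. bij (op s)) \<and>
     (\<forall>s t u. op (op s t) (op s u) = op (op t s) (op t u))"

definition diagT :: "('n \<Rightarrow> 'n \<Rightarrow> 'n) \<Rightarrow> 'n \<Rightarrow> 'n" where
  "diagT op s = op s s"

fun psi_k :: "('n \<Rightarrow> 'n \<Rightarrow> 'n) \<Rightarrow> nat \<Rightarrow> 'n \<Rightarrow> ('n \<Rightarrow> 'n)" where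
  "psi_k op 0 s = id"
| "psi_k op (Suc k) s = op ((diagT op ^^ k) s) \<circ> psi_k op k s"

definition is_class :: "('n \<Rightarrow> 'n \<Rightarrow> 'n) \<Rightarrow> nat \<Rightarrow> bool" where
  "is_class op d \<longleftrightarrow> d \<ge> 1 \<and> (\<forall>s. psi_k op d s = id) \<and>
     (\<forall>d'. d' \<ge> 1 \<and> (\<forall>s. psi_k op d' s = id) \<longrightarrow> d \<le> d')"

text \<open>Elements of the structure group G are represented by words in the generators
  and their inverses: a letter (s, True) is s, a letter (s, False) is s^{-1}.\<close>
type_synonym 'n word = "('n \<times> bool) list"

text \<open>The anti-homomorphism psi : G -> Sym(S), psi(gh) = psi(h) o psi(g).\<close>
fun psi_w :: "('n \<Rightarrow> 'n \<Rightarrow> 'n) \<Rightarrow> 'n word \<Rightarrow> ('n \<Rightarrow> 'n)" where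
  "psi_w op [] = id"
| "psi_w op ((s, b) # w) = psi_w op w \<circ> (if b then op s else inv (op s))"

definition perm_group :: "('n \<Rightarrow> 'n \<Rightarrow> 'n) \<Rightarrow> ('n \<Rightarrow> 'n) set" where
  "perm_group op = range (psi_w op)"

definition perm_mat :: "('n::finite \<Rightarrow> 'n) \<Rightarrow> complex^'n^'n" where
  "perm_mat \<sigma> = (\<chi> i j. if j = \<sigma> i then 1 else 0)"

definition zeta :: "nat \<Rightarrow> complex" where
  "zeta d = cis (2 * pi / real d)"

definition germ_gen :: "('n::finite \<Rightarrow> 'n \<Rightarrow> 'n) \<Rightarrow> nat \<Rightarrow> 'n \<Rightarrow> complex^'n^'n" where
  "germ_gen op d i = (\<chi> a b. if a = b then (if a = i then zeta d else 1) else 0) ** perm_mat (op i)"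

fun pi_w :: "('n::finite \<Rightarrow> 'n \<Rightarrow> 'n) \<Rightarrow> nat \<Rightarrow> 'n word \<Rightarrow> complex^'n^'n" where
  "pi_w op d [] = mat 1"
| "pi_w op d ((s, b) # w) =
     (if b then germ_gen op d s else matrix_inv (germ_gen op d s)) ** pi_w op d w"

definition germ :: "('n::finite \<Rightarrow> 'n \<Rightarrow> 'n) \<Rightarrow> nat \<Rightarrow> (complex^'n^'n) set" where
  "germ op d = range (pi_w op d)"

definition perm_order :: "('n \<Rightarrow> 'n) \<Rightarrow> nat" where
  "perm_order f = (LEAST k. k > 0 \<and> f ^^ k = id)"

end

(*
  (i) Each generator of the germ is a monomial matrix whose pattern of nonzero entries is the
  permutation \<psi>(s); patterns compose under products and invert under inverses, so the pattern of
  \<pi>(g) is \<psi>(g).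

  (ii) A positive word w is sent to a vector in \<nat>\<^sup>n by the 1-cocycle
  vec(v w) = vec v + vec w \<circ> \<psi>(v).  By the cycle set law \<psi>(w) only depends on vec w, so \<psi>
  becomes a map from \<nat>\<^sup>n onto the permutation group \<G> obeying the same cocycle rule, and
  adding j e\<^sub>s to a vector a composes its image \<sigma> with \<psi>\<^sub>j(\<sigma> s) on the left.
  Since \<psi>\<^sub>d = id, the map is d-periodic in each coordinate, so \<G> is the image of
  {0..d-1}\<^sup>n with all fibres of equal size, whence |\<G>| divides d\<^sup>n.  The same rule shows
  that \<psi>\<^sub>j(\<sigma> s) = id iff \<psi>\<^sub>j(s) = id for \<sigma> in \<G>, so \<sigma> \<mapsto> \<psi>(\<sigma> s) \<circ> \<sigma> permutes \<G>
  with all orbits of the same length, the least k with \<psi>\<^sub>k(s) = id; thus each of these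
  lengths divides |\<G>|, and so does the class d.  Finally T\<^sup>d(s) = \<psi>\<^sub>d(s)(s) = s gives
  o(T) | d.
*)

theory Submission
  imports Defs "HOL-Combinatorics.Cycles" "HOL-Combinatorics.Orbits" "HOL-Number_Theory.Cong"
begin

section \<open>Permutations, periods and orbits\<close>

lemma comp_cancel_surj:
  assumes "surj \<sigma>" "f \<circ> \<sigma> = g \<circ> \<sigma>"
  shows "f = g"
proof
  fix x
  obtain y where "x = \<sigma> y"
    using surjD[OF assms(1)] by blast
  then show "f x = g x"
    using fun_cong[OF assms(2), of y] by simp
qed

lemma comp_eq_self_iff: "surj \<sigma> \<Longrightarrow> f \<circ> \<sigma> = \<sigma> \<longleftrightarrow> f = id"
  using comp_cancel_surj[of \<sigma> f id] by auto

lemma inv_eq_funpow_pred: "f ^^ n = id \<Longrightarrow> 0 < n \<Longrightarrow> inv f = f ^^ (n - 1)"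
proof (rule inv_unique_comp)
  assume "f ^^ n = id" "0 < n"
  then have "f ^^ Suc (n - 1) = id" by simp
  then show "f \<circ> f ^^ (n - 1) = id" "f ^^ (n - 1) \<circ> f = id"
    unfolding funpow_Suc_right[symmetric] by simp_all
qed

lemma inv_is_funpow:
  fixes f :: "'n::finite \<Rightarrow> 'n"
  assumes "bij f"
  obtains m where "inv f = f ^^ m"
proof -
  have "permutation f"
    using assms by (simp add: permutation)
  then obtain n where "f ^^ n = id" "0 < n"
    by (rule permutation_is_nilpotent)
  then show thesis
    using that inv_eq_funpow_pred by blast
qed

lemma periods_dvd:
  fixes P :: "nat \<Rightarrow> bool"
  assumes shift: "\<And>i j. P i \<Longrightarrow> P (i + j) \<longleftrightarrow> P j"
    and "P n" "0 < n"
  obtains k where "0 < k" "\<And>j. P j \<longleftrightarrow> k dvd j"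
proof
  define k where "k = (LEAST k. 0 < k \<and> P k)"
  have k: "0 < k \<and> P k"
    unfolding k_def by (rule LeastI[of _ n]) (use assms in blast)
  have multiple: "P (k * q)" for q
  proof (induction q)
    case 0
    show ?case using shift[of k 0] k by simp
  next
    case (Suc q)
    then show ?case using shift[of k "k * q"] k by simp
  qed
  show "0 < k" using k by blast
  fix j
  have "P j \<longleftrightarrow> P (j mod k)"
    using shift[OF multiple, of "j div k" "j mod k"] by simp
  also have "\<dots> \<longleftrightarrow> j mod k = 0"
    using multiple[of 0] not_less_Least[of "j mod k" "\<lambda>k. 0 < k \<and> P k"] k
    by (auto simp: k_def[symmetric])
  finally show "P j \<longleftrightarrow> k dvd j"
    by (simp add: dvd_eq_mod_eq_0)
qed

lemma perm_order_dvd: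
  assumes "f ^^ n = id" "0 < n"
  shows "perm_order f dvd n"
proof -
  have shift: "f ^^ (i + j) = id \<longleftrightarrow> f ^^ j = id" if "f ^^ i = id" for i j
    using that by (simp add: funpow_add)
  obtain k where k: "0 < k" "\<And>j. f ^^ j = id \<longleftrightarrow> k dvd j"
    using periods_dvd[of "\<lambda>j. f ^^ j = id", OF shift assms] by blast
  have "perm_order f = k"
    unfolding perm_order_def k(2) by (rule Least_equality) (auto simp: k(1) dvd_imp_le)
  then show ?thesis
    using k(2) assms(1) by simp
qed

lemma funpow_in_invariant_set: "f ` A \<subseteq> A \<Longrightarrow> x \<in> A \<Longrightarrow> (f ^^ j) x \<in> A"
  by (induction j) auto

lemma card_eq_mult_card_image:
  assumes "finite A" "\<And>x. x \<in> A \<Longrightarrow> card {y \<in> A. g y = g x} = k"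
  shows "card A = k * card (g ` A)"
proof -
  have "(\<Sum>x\<in>A. card {y \<in> g ` A. g x = y}) = k * card (g ` A)"
    by (rule sum_multicount) (use assms in auto)
  moreover have "{y \<in> g ` A. g x = y} = {g x}" if "x \<in> A" for x
    using that by auto
  ultimately show ?thesis
    by simp
qed

lemma orbit_eq_if_in_orbit:
  assumes "x \<in> orbit f x" "y \<in> orbit f x"
  shows "orbit f y = orbit f x"
  using orbit_swap[OF assms] assms(2) by (auto intro: orbit_trans)

lemma dvd_card_if_uniform_period:
  assumes "finite A" "f ` A \<subseteq> A" "0 < k"
    and period: "\<And>x j. x \<in> A \<Longrightarrow> (f ^^ j) x = x \<longleftrightarrow> k dvd j"
  shows "k dvd card A"
proof -
  have orbit_eq: "orbit f x = (\<lambda>j. (f ^^ j) x) ` {..<k}" if "x \<in> A" for x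
    using orbit_altdef_bounded[where f = f and n = k and s = x] period[OF that, of k] \<open>0 < k\<close> by auto
  have self_in_orbit: "x \<in> orbit f x" if "x \<in> A" for x
    using orbit_eq[OF that] \<open>0 < k\<close> by force
  have card_orbit: "card (orbit f x) = k" if "x \<in> A" for x
  proof -
    have "inj_on (\<lambda>j. (f ^^ j) x) {..<k}"
    proof (rule linorder_inj_onI')
      fix i j assume "i \<in> {..<k}" "j \<in> {..<k}" "i < j"
      then have "\<not> k dvd j - i"
        by (auto dest: dvd_imp_le)
      then have "(f ^^ (j - i)) ((f ^^ i) x) \<noteq> (f ^^ i) x"
        using period[OF funpow_in_invariant_set[OF assms(2) that]] by blast
      then show "(f ^^ i) x \<noteq> (f ^^ j) x"
        using \<open>i < j\<close> by (metis funpow_add comp_apply le_add_diff_inverse2 less_imp_le)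
    qed
    then show ?thesis
      by (simp add: orbit_eq[OF that] card_image)
  qed
  have fibre: "{y \<in> A. orbit f y = orbit f x} = orbit f x" if "x \<in> A" for x
  proof -
    have "orbit f x \<subseteq> A"
      using orbit_eq[OF that] funpow_in_invariant_set[OF assms(2) that] by auto
    then show ?thesis
      using self_in_orbit orbit_eq_if_in_orbit[OF self_in_orbit[OF that]] by blast
  qed
  have "card A = k * card (orbit f ` A)"
    by (rule card_eq_mult_card_image) (use assms(1) fibre card_orbit in auto)
  then show ?thesis
    by simp
qed

section \<open>Monomial matrices\<close>

definition monomial_with :: "('n::finite \<Rightarrow> 'n) \<Rightarrow> 'a::field^'n^'n \<Rightarrow> bool" where
  "monomial_with \<sigma> M \<longleftrightarrow> (\<forall>i j. M$i$j \<noteq> 0 \<longleftrightarrow> j = \<sigma> i)"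

definition monomial_pattern :: "'a::zero^'n^'m \<Rightarrow> 'm \<Rightarrow> 'n" where
  "monomial_pattern M i = (SOME j. M$i$j \<noteq> 0)"

lemma monomial_pattern_eq: "monomial_with \<sigma> M \<Longrightarrow> monomial_pattern M = \<sigma>"
  by (auto simp: monomial_with_def monomial_pattern_def)

lemma monomial_with_mat_1: "monomial_with id (mat 1)"
  by (simp add: monomial_with_def mat_def)

lemma monomial_with_perm_mat: "monomial_with \<sigma> (perm_mat \<sigma>)"
  by (simp add: monomial_with_def perm_mat_def)

lemma monomial_with_mult_entry:
  assumes "monomial_with \<sigma> A"
  shows "(A ** M)$i$k = A$i$(\<sigma> i) * M$(\<sigma> i)$k"
proof -
  have "(A ** M)$i$k = (\<Sum>j\<in>UNIV. A$i$j * M$j$k)"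
    by (simp add: matrix_matrix_mult_def)
  also have "\<dots> = (\<Sum>j\<in>{\<sigma> i}. A$i$j * M$j$k)"
    using assms by (intro sum.mono_neutral_right) (auto simp: monomial_with_def)
  finally show ?thesis by simp
qed

lemma monomial_with_mult:
  assumes "monomial_with \<sigma> A" "monomial_with \<tau> M"
  shows "monomial_with (\<tau> \<circ> \<sigma>) (A ** M)"
  using assms by (auto simp: monomial_with_mult_entry[OF assms(1)] monomial_with_def)

lemma matrix_inv_eqI:
  fixes A :: "'a::semiring_1^'n^'m"
  assumes "A ** B = mat 1" "B ** A = mat 1"
  shows "matrix_inv A = B"
proof -
  have inv: "A ** matrix_inv A = mat 1 \<and> matrix_inv A ** A = mat 1"
    unfolding matrix_inv_def by (rule someI[of _ B]) (use assms in auto)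
  have "matrix_inv A = (B ** A) ** matrix_inv A"
    using assms(2) by simp
  also have "\<dots> = B"
    using inv by (simp add: matrix_mul_assoc[symmetric])
  finally show ?thesis .
qed

lemma monomial_with_matrix_inv:
  assumes "bij \<sigma>" and M: "monomial_with \<sigma> M"
  shows "monomial_with (inv \<sigma>) (matrix_inv M)"
proof -
  define B where "B = (\<chi> i j. if j = inv \<sigma> i then inverse (M$j$i) else 0)"
  have M_at: "M$(inv \<sigma> i)$i \<noteq> 0" for i
    using M \<open>bij \<sigma>\<close> by (simp add: monomial_with_def bij_is_surj surj_f_inv_f)
  have B: "monomial_with (inv \<sigma>) B"
    using M_at by (simp add: monomial_with_def B_def)
  have "M ** B = mat 1"
    using M \<open>bij \<sigma>\<close>
    by (auto simp: vec_eq_iff mat_def monomial_with_mult_entry[OF M] B_def monomial_with_def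
        bij_inv_eq_iff bij_is_inj inj_eq)
  moreover have "B ** M = mat 1"
  proof -
    have "(B ** M)$i$k = inverse (M$(inv \<sigma> i)$i) * M$(inv \<sigma> i)$k" for i k
      unfolding monomial_with_mult_entry[OF B] by (simp add: B_def)
    then show ?thesis
      using M M_at \<open>bij \<sigma>\<close>
      by (auto simp: vec_eq_iff mat_def monomial_with_def bij_is_surj surj_f_inv_f)
  qed
  ultimately show ?thesis
    using B by (simp add: matrix_inv_eqI)
qed

lemma monomial_with_germ_gen:
  fixes op :: "'n::finite \<Rightarrow> 'n \<Rightarrow> 'n"
  shows "monomial_with (op s) (germ_gen op d s)"
proof -
  have "monomial_with id ((\<chi> a b. if a = b then (if a = s then zeta d else 1) else 0) :: complex^'n^'n)"
    by (simp add: monomial_with_def zeta_def)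
  from monomial_with_mult[OF this monomial_with_perm_mat]
  show ?thesis by (simp add: germ_gen_def)
qed

lemma monomial_with_pi_w:
  assumes "\<And>s. bij (op s)"
  shows "monomial_with (psi_w op w) (pi_w op d w)"
proof (induction w)
  case Nil
  show ?case
    unfolding psi_w.simps pi_w.simps by (rule monomial_with_mat_1)
next
  case (Cons x w)
  obtain s b where x: "x = (s, b)" by force
  have "monomial_with (if b then op s else inv (op s))
          (if b then germ_gen op d s else matrix_inv (germ_gen op d s))"
    by (simp add: monomial_with_germ_gen monomial_with_matrix_inv assms)
  from monomial_with_mult[OF this Cons.IH] show ?case
    unfolding x psi_w.simps pi_w.simps .
qed

lemma psi_w_factors_through_pi_w:
  assumes "\<And>s. bij (op s)"
  shows "\<exists>\<phi>. \<phi> ` germ op d \<subseteq> perm_group op \<and> (\<forall>w. psi_w op w = \<phi> (pi_w op d w))"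
proof -
  have "psi_w op w = monomial_pattern (pi_w op d w)" for w
    using monomial_pattern_eq[OF monomial_with_pi_w[OF assms]] by simp
  then show ?thesis
    by (intro exI[of _ monomial_pattern]) (auto simp: germ_def perm_group_def)
qed

section \<open>The maps \<open>\<psi>\<^sub>k\<close>\<close>

lemma psi_k_diagT: "psi_k op j s s = (diagT op ^^ j) s"
proof (induction j)
  case (Suc j)
  then show ?case by (simp add: diagT_def[of op "(diagT op ^^ j) s"])
qed simp

lemma psi_k_add: "psi_k op (i + j) s = psi_k op j ((diagT op ^^ i) s) \<circ> psi_k op i s"
proof (induction j)
  case (Suc j)
  have "(diagT op ^^ (i + j)) s = (diagT op ^^ j) ((diagT op ^^ i) s)"
    by (simp add: funpow_add add.commute[of i j])
  with Suc show ?case by (simp add: comp_assoc)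
qed simp

lemma psi_k_add_if_id: "psi_k op i s = id \<Longrightarrow> psi_k op (i + j) s = psi_k op j s"
  using psi_k_add[of op i j s] psi_k_diagT[of op i s] by simp

lemma bij_psi_k: "(\<And>s. bij (op s)) \<Longrightarrow> bij (psi_k op j s)"
  by (induction j) (auto intro: bij_comp)

lemma psi_k_periods:
  assumes "psi_k op n s = id" "0 < n"
  obtains k where "0 < k" "\<And>j. psi_k op j s = id \<longleftrightarrow> k dvd j"
proof (rule periods_dvd[of "\<lambda>j. psi_k op j s = id" n])
  show "psi_k op (i + j) s = id \<longleftrightarrow> psi_k op j s = id" if "psi_k op i s = id" for i j
    using psi_k_add_if_id[OF that] by simp
qed (use assms that in auto)

lemma is_class_dvd_iff:
  assumes "is_class op d"
  shows "(\<forall>s. psi_k op j s = id) \<longleftrightarrow> d dvd j"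
proof -
  have d: "0 < d" "\<forall>s. psi_k op d s = id"
    using assms by (auto simp: is_class_def)
  have shift: "(\<forall>s. psi_k op (i + j) s = id) \<longleftrightarrow> (\<forall>s. psi_k op j s = id)"
    if "\<forall>s. psi_k op i s = id" for i j
    using that by (simp add: psi_k_add_if_id)
  obtain k where k: "0 < k" "\<And>j. (\<forall>s. psi_k op j s = id) \<longleftrightarrow> k dvd j"
    using periods_dvd[of "\<lambda>j. \<forall>s. psi_k op j s = id", OF shift d(2,1)] by blast
  have "d \<le> k"
    using assms k by (auto simp: is_class_def)
  moreover have "k \<le> d"
    using k d by (auto intro: dvd_imp_le)
  ultimately show ?thesis
    using k(2) by simp
qed

lemma perm_order_diagT_dvd_class:
  assumes "is_class op d"
  shows "perm_order (diagT op) dvd d"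
proof (rule perm_order_dvd)
  show "diagT op ^^ d = id"
    using assms psi_k_diagT[of op d] by (auto simp: is_class_def fun_eq_iff)
  show "0 < d"
    using assms by (simp add: is_class_def)
qed

section \<open>Positive words and their vectors\<close>

abbreviation pos_word :: "'n list \<Rightarrow> 'n word" where
  "pos_word w \<equiv> map (\<lambda>t. (t, True)) w"

lemma psi_w_append: "psi_w op (v @ w) = psi_w op w \<circ> psi_w op v"
proof (induction v)
  case (Cons x v)
  then show ?case by (cases x) (simp add: comp_assoc)
qed simp

lemma psi_w_pos_replicate: "psi_w op (pos_word (replicate m s)) = op s ^^ m"
  by (induction m) (simp_all add: funpow_swap1)

lemma comp_in_perm_group:
  "\<sigma> \<in> perm_group op \<Longrightarrow> \<tau> \<in> perm_group op \<Longrightarrow> \<tau> \<circ> \<sigma> \<in> perm_group op"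
  unfolding perm_group_def by (auto simp flip: psi_w_append)

lemma funpow_in_perm_group: "\<sigma> \<in> perm_group op \<Longrightarrow> \<sigma> ^^ m \<in> perm_group op"
proof (induction m)
  case 0
  have "id \<in> perm_group op"
    unfolding perm_group_def by (rule range_eqI[where x = "[]"]) simp
  then show ?case by (simp add: id_def)
next
  case (Suc m)
  then have "\<sigma> \<circ> \<sigma> ^^ m \<in> perm_group op"
    by (intro comp_in_perm_group)
  then show ?case
    by (simp only: funpow.simps(2))
qed

definition unit_vec :: "'n \<Rightarrow> 'n \<Rightarrow> nat" where
  "unit_vec t i = (if i = t then 1 else 0)"

lemma unit_vec_inj: "inj \<sigma> \<Longrightarrow> unit_vec (\<sigma> s) (\<sigma> i) = unit_vec s i"
  by (simp add: unit_vec_def inj_eq)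

fun word_vec :: "('n \<Rightarrow> 'n \<Rightarrow> 'n) \<Rightarrow> 'n list \<Rightarrow> 'n \<Rightarrow> nat" where
  "word_vec op [] = (\<lambda>_. 0)"
| "word_vec op (t # w) = (\<lambda>i. unit_vec t i + word_vec op w (op t i))"

lemma word_vec_append:
  "word_vec op (v @ w) = (\<lambda>i. word_vec op v i + word_vec op w (psi_w op (pos_word v) i))"
  by (induction v) auto

definition perm_of_vec :: "('n \<Rightarrow> 'n \<Rightarrow> 'n) \<Rightarrow> ('n \<Rightarrow> nat) \<Rightarrow> 'n \<Rightarrow> 'n" where
  "perm_of_vec op a = psi_w op (pos_word (SOME w. word_vec op w = a))"

text \<open>On \<open>perm_of_vec op a\<close> this is \<open>perm_of_vec op (a + unit_vec s)\<close>
  (\<open>perm_of_vec_add_mult_unit_vec\<close> below with \<open>j = 1\<close>).\<close>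

definition translate_perm :: "('n \<Rightarrow> 'n \<Rightarrow> 'n) \<Rightarrow> 'n \<Rightarrow> ('n \<Rightarrow> 'n) \<Rightarrow> 'n \<Rightarrow> 'n" where
  "translate_perm op s \<sigma> = op (\<sigma> s) \<circ> \<sigma>"

lemma translate_perm_funpow: "(translate_perm op s ^^ j) \<sigma> = psi_k op j (\<sigma> s) \<circ> \<sigma>"
proof (induction j)
  case (Suc j)
  then show ?case
    by (simp add: translate_perm_def psi_k_diagT comp_assoc)
qed simp

lemma translate_perm_in_perm_group:
  assumes "\<sigma> \<in> perm_group op"
  shows "translate_perm op s \<sigma> \<in> perm_group op"
proof -
  have "op (\<sigma> s) = psi_w op [(\<sigma> s, True)]" by simp
  then have "op (\<sigma> s) \<in> perm_group op" by (metis perm_group_def rangeI)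
  with assms show ?thesis
    unfolding translate_perm_def by (rule comp_in_perm_group)
qed

definition residue_vecs :: "nat \<Rightarrow> ('n \<Rightarrow> nat) set" where
  "residue_vecs d = (UNIV \<rightarrow>\<^sub>E {..<d})"

lemma card_residue_vecs: "card (residue_vecs d :: ('n::finite \<Rightarrow> nat) set) = d ^ CARD('n)"
  unfolding residue_vecs_def by (subst card_funcsetE) auto

lemma finite_residue_vecs: "finite (residue_vecs d :: ('n::finite \<Rightarrow> nat) set)"
  by (simp add: residue_vecs_def finite_PiE)

lemma bij_betw_residue_vecs_shift:
  fixes \<sigma> :: "'n::finite \<Rightarrow> 'n"
  assumes "surj \<sigma>" "0 < d"
  shows "bij_betw (\<lambda>b i. (a i + b (\<sigma> i)) mod d) (residue_vecs d) (residue_vecs d)"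
proof -
  let ?h = "\<lambda>b i. (a i + b (\<sigma> i)) mod d"
  have into: "?h ` residue_vecs d \<subseteq> residue_vecs d"
    using assms(2) by (auto simp: residue_vecs_def PiE_iff)
  have inj: "inj_on ?h (residue_vecs d)"
  proof (rule inj_onI)
    fix b b' assume b: "b \<in> residue_vecs d" "b' \<in> residue_vecs d" and "?h b = ?h b'"
    have "b (\<sigma> i) = b' (\<sigma> i)" for i
    proof -
      have "[a i + b (\<sigma> i) = a i + b' (\<sigma> i)] (mod d)"
        using \<open>?h b = ?h b'\<close> by (simp add: cong_def fun_eq_iff)
      then have "[b (\<sigma> i) = b' (\<sigma> i)] (mod d)"
        by (simp only: cong_add_lcancel_nat)
      then show ?thesis
        using b by (simp add: cong_def residue_vecs_def PiE_iff)
    qed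
    then have "b \<circ> \<sigma> = b' \<circ> \<sigma>"
      by (simp add: fun_eq_iff)
    then show "b = b'"
      by (rule comp_cancel_surj[OF assms(1)])
  qed
  show ?thesis
    unfolding bij_betw_def using endo_inj_surj[OF finite_residue_vecs into inj] inj by blast
qed

locale finite_cycle_set =
  fixes op :: "'n::finite \<Rightarrow> 'n \<Rightarrow> 'n"
  assumes cycle_set: "cycle_set op"
begin

lemma bij_op: "bij (op s)"
  using cycle_set by (simp add: cycle_set_def)

lemma cycle_law: "op (op s t) (op s u) = op (op t s) (op t u)"
  using cycle_set by (simp add: cycle_set_def)

lemma bij_psi_w: "bij (psi_w op w)"
proof (induction w)
  case (Cons x w)
  obtain s b where x: "x = (s, b)" by force
  have "bij (if b then op s else inv (op s))"
    by (simp add: bij_op bij_imp_bij_inv)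
  then show ?case
    unfolding x psi_w.simps using Cons.IH by (rule bij_comp)
qed (simp only: psi_w.simps bij_id)

lemma bij_in_perm_group: "\<sigma> \<in> perm_group op \<Longrightarrow> bij \<sigma>"
  using bij_psi_w by (auto simp: perm_group_def)

lemma sum_word_vec: "(\<Sum>i\<in>UNIV. word_vec op w i) = length w"
proof (induction w)
  case (Cons t w)
  have "(\<Sum>i\<in>UNIV. word_vec op w (op t i)) = (\<Sum>i\<in>UNIV. word_vec op w i)"
    using bij_op[of t] by (intro sum.reindex_bij_betw) (simp add: bij_betw_def bij_def)
  with Cons show ?case
    by (simp add: sum.distrib unit_vec_def)
qed simp

lemma length_eq_if_word_vec_eq: "word_vec op w = word_vec op w' \<Longrightarrow> length w = length w'"
  using sum_word_vec[of w] sum_word_vec[of w'] by simp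

lemma word_vec_append_cancel:
  assumes "word_vec op (v @ u) = word_vec op (v @ u')"
  shows "word_vec op u = word_vec op u'"
proof (rule comp_cancel_surj)
  show "surj (psi_w op (pos_word v))"
    using bij_psi_w by (rule bij_is_surj)
  show "word_vec op u \<circ> psi_w op (pos_word v) = word_vec op u' \<circ> psi_w op (pos_word v)"
    using assms by (simp add: word_vec_append fun_eq_iff)
qed

lemma word_vec_Cons_residual:
  assumes "1 \<le> b r" "word_vec op z = (\<lambda>x. b (inv (op r) x) - unit_vec r (inv (op r) x))"
  shows "word_vec op (r # z) = b"
  using assms by (auto simp: fun_eq_iff unit_vec_def bij_is_inj[OF bij_op])

lemma word_vec_surj: "\<exists>w. word_vec op w = b"
proof (induction "\<Sum>i\<in>UNIV. b i" arbitrary: b)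
  case 0
  then have "b = word_vec op []" by (simp add: fun_eq_iff)
  then show ?case by blast
next
  case (Suc n)
  have "\<not> (\<forall>r. b r = 0)"
  proof
    assume "\<forall>r. b r = 0"
    then have "(\<Sum>i\<in>UNIV. b i) = 0" by simp
    with Suc.hyps(2) show False by simp
  qed
  then obtain r where r: "1 \<le> b r"
    by (auto simp: Suc_le_eq)
  define b' where "b' x = b (inv (op r) x) - unit_vec r (inv (op r) x)" for x
  have "(\<Sum>i\<in>UNIV. b' i) = (\<Sum>i\<in>UNIV. b' (op r i))"
    using bij_op[of r] by (intro sum.reindex_bij_betw[symmetric]) (simp add: bij_betw_def bij_def)
  also have "\<dots> = (\<Sum>i\<in>UNIV. b i - unit_vec r i)"
    by (simp add: b'_def bij_is_inj[OF bij_op])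
  also have "\<dots> = (\<Sum>i\<in>UNIV. b i) - (\<Sum>i\<in>UNIV. unit_vec r i)"
    using r by (intro sum_subtractf_nat) (auto simp: unit_vec_def)
  also have "\<dots> = n"
    using Suc.hyps(2) by (simp add: unit_vec_def)
  finally obtain z where "word_vec op z = b'"
    using Suc.hyps(1) by blast
  then show ?case
    using word_vec_Cons_residual[of b r, OF r] b'_def by blast
qed

lemma ex_word_vec_Cons: "1 \<le> b r \<Longrightarrow> \<exists>z. word_vec op (r # z) = b"
  using word_vec_surj word_vec_Cons_residual by blast

text \<open>The defining relations \<open>s (s * t) = t (t * s)\<close> of the structure group.\<close>

lemma word_vec_relation: "word_vec op [s, op s t] = word_vec op [t, op t s]"
proof -
  have "word_vec op [s, op s t] = (\<lambda>i. unit_vec s i + unit_vec t i)" for s t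
    by (simp add: unit_vec_inj[OF bij_is_inj[OF bij_op]])
  then show ?thesis
    by (simp add: add.commute)
qed

lemma psi_w_relation: "psi_w op (pos_word [s, op s t]) = psi_w op (pos_word [t, op t s])"
  by (simp add: fun_eq_iff cycle_law)

lemma word_vec_Cons_diamond:
  assumes eq: "word_vec op (t # u) = word_vec op (t' # u')" and "t \<noteq> t'"
  obtains z where "word_vec op u = word_vec op (op t t' # z)"
    "word_vec op u' = word_vec op (op t' t # z)"
proof -
  have "1 \<le> word_vec op u (op t t')"
    using fun_cong[OF eq, of t'] \<open>t \<noteq> t'\<close> by (simp add: unit_vec_def)
  then obtain z where z: "word_vec op (op t t' # z) = word_vec op u"
    using ex_word_vec_Cons by blast
  have "1 \<le> word_vec op u' (op t' t)"
    using fun_cong[OF eq, of t] \<open>t \<noteq> t'\<close> by (simp add: unit_vec_def)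
  then obtain z' where z': "word_vec op (op t' t # z') = word_vec op u'"
    using ex_word_vec_Cons by blast
  have "word_vec op ([t, op t t'] @ z) = word_vec op (t # u)"
    by (simp add: z[symmetric])
  also have "\<dots> = word_vec op (t' # u')"
    by (fact eq)
  also have "\<dots> = word_vec op ([t', op t' t] @ z')"
    by (simp add: z'[symmetric])
  also have "\<dots> = word_vec op ([t, op t t'] @ z')"
    by (simp only: word_vec_append word_vec_relation psi_w_relation)
  finally have "word_vec op z' = word_vec op z"
    by (rule word_vec_append_cancel[symmetric])
  then have "word_vec op (op t' t # z') = word_vec op (op t' t # z)"
    by simp
  then show thesis
    by (intro that[of z]) (simp_all only: z[symmetric] z'[symmetric])
qed

lemma psi_w_eq_if_word_vec_eq:
  "word_vec op w = word_vec op w' \<Longrightarrow> psi_w op (pos_word w) = psi_w op (pos_word w')"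
proof (induction "length w" arbitrary: w w' rule: less_induct)
  case less
  show ?case
  proof (cases w)
    case Nil
    then show ?thesis
      using length_eq_if_word_vec_eq[OF less.prems] by simp
  next
    case (Cons t u)
    then obtain t' u' where w': "w' = t' # u'"
      using length_eq_if_word_vec_eq[OF less.prems] by (cases w') auto
    have IH: "psi_w op (pos_word v) = psi_w op (pos_word v')"
      if "length v < length w" "word_vec op v = word_vec op v'" for v v'
      using less.hyps that by blast
    show ?thesis
    proof (cases "t = t'")
      case True
      then have "word_vec op u = word_vec op u'"
        using word_vec_append_cancel[of "[t]" u u'] less.prems Cons w' by simp
      then show ?thesis
        using IH[of u u'] Cons w' True by simp
    next
      case False
      obtain z where z: "word_vec op u = word_vec op (op t t' # z)"
          "word_vec op u' = word_vec op (op t' t # z)"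
        using word_vec_Cons_diamond[OF less.prems[unfolded Cons w'] False] by blast
      have "length u' < length w"
        using length_eq_if_word_vec_eq[OF less.prems] Cons w' by simp
      then have "psi_w op (pos_word u) = psi_w op (pos_word (op t t' # z))"
        "psi_w op (pos_word u') = psi_w op (pos_word (op t' t # z))"
        using IH[OF _ z(1)] IH[OF _ z(2)] Cons by simp_all
      then show ?thesis
        using Cons w' by (simp add: fun_eq_iff cycle_law)
    qed
  qed
qed

lemma perm_of_vec_word_vec: "perm_of_vec op (word_vec op w) = psi_w op (pos_word w)"
  unfolding perm_of_vec_def by (rule psi_w_eq_if_word_vec_eq) (rule someI[of _ w], rule refl)

lemma perm_of_vec_cocycle:
  "perm_of_vec op (\<lambda>i. a i + b (perm_of_vec op a i)) = perm_of_vec op b \<circ> perm_of_vec op a"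
proof -
  obtain v w where "word_vec op v = a" "word_vec op w = b"
    using word_vec_surj by meson
  then show ?thesis
    using perm_of_vec_word_vec[of "v @ w"] perm_of_vec_word_vec[of v] perm_of_vec_word_vec[of w]
    by (simp add: word_vec_append psi_w_append)
qed

lemma perm_of_vec_zero: "perm_of_vec op (\<lambda>_. 0) = id"
  using perm_of_vec_word_vec[of "[]"] by simp

lemma perm_of_vec_unit_vec: "perm_of_vec op (unit_vec s) = op s"
  using perm_of_vec_word_vec[of "[s]"] by simp

lemma bij_perm_of_vec: "bij (perm_of_vec op a)"
  by (simp add: perm_of_vec_def bij_psi_w)

lemma perm_of_vec_mult_unit_vec: "perm_of_vec op (\<lambda>i. j * unit_vec s i) = psi_k op j s"
proof (induction j)
  case 0
  then show ?case by (simp add: perm_of_vec_zero)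
next
  case (Suc j)
  have "inj (psi_k op j s)"
    by (rule bij_is_inj[OF bij_psi_k[OF bij_op]])
  from unit_vec_inj[OF this, of s]
  have "unit_vec ((diagT op ^^ j) s) (psi_k op j s i) = unit_vec s i" for i
    by (simp add: psi_k_diagT)
  then have "perm_of_vec op (\<lambda>i. Suc j * unit_vec s i)
      = perm_of_vec op (\<lambda>i. j * unit_vec s i
          + unit_vec ((diagT op ^^ j) s) (perm_of_vec op (\<lambda>i. j * unit_vec s i) i))"
    by (simp add: Suc.IH add.commute)
  also have "\<dots> = op ((diagT op ^^ j) s) \<circ> psi_k op j s"
    using perm_of_vec_cocycle[of "\<lambda>i. j * unit_vec s i" "unit_vec ((diagT op ^^ j) s)"]
    by (simp only: perm_of_vec_unit_vec Suc.IH)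
  finally show ?case
    by simp
qed

lemma perm_of_vec_add_mult_unit_vec:
  "perm_of_vec op (\<lambda>i. a i + j * unit_vec s i) = psi_k op j (perm_of_vec op a s) \<circ> perm_of_vec op a"
proof -
  have "unit_vec (perm_of_vec op a s) (perm_of_vec op a i) = unit_vec s i" for i
    by (rule unit_vec_inj[OF bij_is_inj[OF bij_perm_of_vec]])
  then have "perm_of_vec op (\<lambda>i. a i + j * unit_vec s i)
      = perm_of_vec op (\<lambda>i. a i + j * unit_vec (perm_of_vec op a s) (perm_of_vec op a i))"
    by simp
  also have "\<dots> = psi_k op j (perm_of_vec op a s) \<circ> perm_of_vec op a"
    using perm_of_vec_cocycle[of a "\<lambda>i. j * unit_vec (perm_of_vec op a s) i"]
    by (simp add: perm_of_vec_mult_unit_vec)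
  finally show ?thesis .
qed

lemma perm_group_eq_pos_words: "perm_group op = range (\<lambda>v. psi_w op (pos_word v))"
proof
  show "range (\<lambda>v. psi_w op (pos_word v)) \<subseteq> perm_group op"
    by (auto simp: perm_group_def)
  have "\<exists>v. psi_w op w = psi_w op (pos_word v)" for w
  proof (induction w)
    case Nil
    have "psi_w op [] = psi_w op (pos_word [])" by simp
    then show ?case by blast
  next
    case (Cons x w)
    obtain s b where x: "x = (s, b)" by force
    obtain m where m: "(if b then op s else inv (op s)) = op s ^^ m"
    proof (cases b)
      case True
      then show thesis using that[of 1] by simp
    next
      case False
      obtain m where "inv (op s) = op s ^^ m"
        using inv_is_funpow[OF bij_op] .
      then show thesis using that False by simp
    qed
    obtain v where v: "psi_w op w = psi_w op (pos_word v)"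
      using Cons.IH by blast
    have "psi_w op (x # w) = psi_w op (pos_word (replicate m s @ v))"
      by (simp only: x psi_w.simps m v map_append psi_w_append psi_w_pos_replicate)
    then show ?case by blast
  qed
  then show "perm_group op \<subseteq> range (\<lambda>v. psi_w op (pos_word v))"
    by (auto simp: perm_group_def)
qed

lemma range_perm_of_vec: "range (perm_of_vec op) = perm_group op"
proof -
  have "surj (word_vec op)"
    unfolding surj_def by (metis word_vec_surj)
  then have "range (perm_of_vec op) = perm_of_vec op ` range (word_vec op)"
    by simp
  also have "\<dots> = perm_group op"
    by (simp add: image_image perm_of_vec_word_vec perm_group_eq_pos_words)
  finally show ?thesis .
qed

lemma inv_in_perm_group:
  assumes "\<sigma> \<in> perm_group op"
  shows "inv \<sigma> \<in> perm_group op"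
proof -
  obtain m where "inv \<sigma> = \<sigma> ^^ m"
    using inv_is_funpow[OF bij_in_perm_group[OF assms]] .
  then show ?thesis
    using funpow_in_perm_group[OF assms] by simp
qed

lemma psi_k_eq_id_image:
  assumes "\<sigma> \<in> perm_group op" "psi_k op j s = id"
  shows "psi_k op j (\<sigma> s) = id"
proof -
  obtain a where a: "\<sigma> = perm_of_vec op a"
    using assms(1) by (auto simp flip: range_perm_of_vec)
  have "psi_k op j (\<sigma> s) \<circ> \<sigma> = perm_of_vec op (\<lambda>i. a i + j * unit_vec s i)"
    by (simp add: a perm_of_vec_add_mult_unit_vec)
  also have "\<dots> = perm_of_vec op (\<lambda>i. j * unit_vec s i + a (psi_k op j s i))"
    using assms(2) by (simp add: add.commute)
  also have "\<dots> = \<sigma> \<circ> psi_k op j s"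
    using perm_of_vec_cocycle[of "\<lambda>i. j * unit_vec s i" a]
    by (simp add: perm_of_vec_mult_unit_vec a)
  also have "\<dots> = \<sigma>"
    using assms(2) by simp
  finally show ?thesis
    using comp_eq_self_iff[OF bij_is_surj[OF bij_perm_of_vec]] a by blast
qed

lemma psi_k_eq_id_image_iff:
  assumes "\<sigma> \<in> perm_group op"
  shows "psi_k op j (\<sigma> s) = id \<longleftrightarrow> psi_k op j s = id"
proof
  have "inv \<sigma> (\<sigma> s) = s"
    using bij_in_perm_group[OF assms] by (simp add: bij_is_inj)
  assume "psi_k op j (\<sigma> s) = id"
  from psi_k_eq_id_image[OF inv_in_perm_group[OF assms] this]
  show "psi_k op j s = id"
    using \<open>inv \<sigma> (\<sigma> s) = s\<close> by simp
qed (rule psi_k_eq_id_image[OF assms])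

end

locale finite_cycle_set_of_class = finite_cycle_set op for op :: "'n::finite \<Rightarrow> 'n \<Rightarrow> 'n" +
  fixes d :: nat
  assumes has_class: "is_class op d"
begin

lemma class_pos: "0 < d"
  using has_class by (simp add: is_class_def)

lemma psi_k_class_multiple: "d dvd j \<Longrightarrow> psi_k op j s = id"
  using is_class_dvd_iff[OF has_class] by blast

lemma class_dvd_card_perm_group: "d dvd card (perm_group op)"
proof -
  have "psi_k op (card (perm_group op)) s = id" for s
  proof -
    obtain k where k: "0 < k" "\<And>j. psi_k op j s = id \<longleftrightarrow> k dvd j"
      using psi_k_periods[OF psi_k_class_multiple[OF dvd_refl, where s = s] class_pos] by metis
    have "k dvd card (perm_group op)"
    proof (rule dvd_card_if_uniform_period)
      show "finite (perm_group op)"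
        by (rule finite_subset[OF subset_UNIV finite_class.finite_UNIV])
      show "translate_perm op s ` perm_group op \<subseteq> perm_group op"
        by (rule image_subsetI) (rule translate_perm_in_perm_group)
      fix \<sigma> j assume \<sigma>: "\<sigma> \<in> perm_group op"
      have "(translate_perm op s ^^ j) \<sigma> = \<sigma> \<longleftrightarrow> psi_k op j (\<sigma> s) = id"
        unfolding translate_perm_funpow
        using comp_eq_self_iff[OF bij_is_surj[OF bij_in_perm_group[OF \<sigma>]]] .
      also have "\<dots> \<longleftrightarrow> k dvd j"
        using psi_k_eq_id_image_iff[OF \<sigma>, of j s] k(2)[of j] by simp
      finally show "(translate_perm op s ^^ j) \<sigma> = \<sigma> \<longleftrightarrow> k dvd j" .
    qed (fact k(1))
    then show ?thesis
      using k(2) by simp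
  qed
  then show ?thesis
    using is_class_dvd_iff[OF has_class, of "card (perm_group op)"] by simp
qed

lemma perm_of_vec_add_mult_class: "perm_of_vec op (\<lambda>i. a i + d * c i) = perm_of_vec op a"
proof -
  have "perm_of_vec op (\<lambda>i. a i + (if i \<in> F then d * c i else 0)) = perm_of_vec op a"
    if "finite F" for F
    using that
  proof (induction F)
    case (insert s F)
    have "(\<lambda>i. a i + (if i \<in> insert s F then d * c i else 0))
        = (\<lambda>i. (a i + (if i \<in> F then d * c i else 0)) + d * c s * unit_vec s i)"
      using insert.hyps(2) by (auto simp: unit_vec_def fun_eq_iff)
    then show ?case
      using insert.IH by (simp add: perm_of_vec_add_mult_unit_vec psi_k_class_multiple)
  qed simp
  from this[of UNIV] show ?thesis
    by simp
qed

lemma perm_of_vec_mod_class: "perm_of_vec op (\<lambda>i. a i mod d) = perm_of_vec op a"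
  using perm_of_vec_add_mult_class[of "\<lambda>i. a i mod d" "\<lambda>i. a i div d"] by simp

lemma perm_of_vec_image_residue_vecs: "perm_of_vec op ` residue_vecs d = perm_group op"
proof -
  have "perm_of_vec op a \<in> perm_of_vec op ` residue_vecs d" for a
  proof
    show "perm_of_vec op a = perm_of_vec op (\<lambda>i. a i mod d)"
      by (simp add: perm_of_vec_mod_class)
    show "(\<lambda>i. a i mod d) \<in> residue_vecs d"
      using class_pos by (simp add: residue_vecs_def PiE_iff)
  qed
  then show ?thesis
    by (auto simp flip: range_perm_of_vec)
qed

lemma card_fibre_perm_of_vec:
  fixes a :: "'n \<Rightarrow> nat"
  assumes "a \<in> residue_vecs d"
  shows "card {v \<in> residue_vecs d. perm_of_vec op v = perm_of_vec op a}
    = card {v \<in> residue_vecs d. perm_of_vec op v = id}"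
proof -
  let ?\<sigma> = "perm_of_vec op a"
  \<comment> \<open>left multiplication by \<open>a\<close> for the product \<open>(a, b) \<mapsto> (a + b \<circ> perm_of_vec op a) mod d\<close>\<close>
  define h where "h b = (\<lambda>i. (a i + b (?\<sigma> i)) mod d)" for b :: "'n \<Rightarrow> nat"
  have h: "bij_betw h (residue_vecs d) (residue_vecs d)"
    unfolding h_def by (rule bij_betw_residue_vecs_shift[OF bij_is_surj[OF bij_perm_of_vec] class_pos])
  have h_perm: "perm_of_vec op (h b) = perm_of_vec op b \<circ> ?\<sigma>" for b
    unfolding h_def perm_of_vec_mod_class by (rule perm_of_vec_cocycle)
  have "{v \<in> residue_vecs d. perm_of_vec op v = ?\<sigma>} = h ` {v \<in> residue_vecs d. perm_of_vec op v = id}"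
  proof
    show "h ` {v \<in> residue_vecs d. perm_of_vec op v = id} \<subseteq> {v \<in> residue_vecs d. perm_of_vec op v = ?\<sigma>}"
      using bij_betwE[OF h] h_perm by fastforce
    show "{v \<in> residue_vecs d. perm_of_vec op v = ?\<sigma>} \<subseteq> h ` {v \<in> residue_vecs d. perm_of_vec op v = id}"
    proof
      fix v assume v: "v \<in> {v \<in> residue_vecs d. perm_of_vec op v = ?\<sigma>}"
      then obtain b where b: "b \<in> residue_vecs d" "v = h b"
        using bij_betw_imp_surj_on[OF h] by blast
      then have "perm_of_vec op b \<circ> ?\<sigma> = ?\<sigma>"
        using v h_perm by simp
      then have "perm_of_vec op b = id"
        using comp_eq_self_iff[OF bij_is_surj[OF bij_perm_of_vec]] by blast
      then show "v \<in> h ` {v \<in> residue_vecs d. perm_of_vec op v = id}"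
        using b by blast
    qed
  qed
  moreover have "inj_on h {v \<in> residue_vecs d. perm_of_vec op v = id}"
    using bij_betw_imp_inj_on[OF h] by (rule inj_on_subset) auto
  ultimately show ?thesis
    by (simp add: card_image)
qed

lemma card_perm_group_dvd_class_pow: "card (perm_group op) dvd d ^ CARD('n)"
proof -
  have "card (residue_vecs d :: ('n \<Rightarrow> nat) set)
      = card {v \<in> residue_vecs d. perm_of_vec op v = id} * card (perm_of_vec op ` residue_vecs d)"
    by (rule card_eq_mult_card_image[OF finite_residue_vecs card_fibre_perm_of_vec])
  then show ?thesis
    by (simp add: card_residue_vecs perm_of_vec_image_residue_vecs)
qed

end

theorem mainTheorem5:
  fixes op :: "'n::finite \<Rightarrow> 'n \<Rightarrow> 'n" and d :: nat
  assumes "cycle_set op" and "is_class op d"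
  shows "(\<exists>\<phi> :: complex^'n^'n \<Rightarrow> ('n \<Rightarrow> 'n).
            \<phi> ` germ op d \<subseteq> perm_group op \<and> (\<forall>w. psi_w op w = \<phi> (pi_w op d w)))
       \<and> perm_order (diagT op) dvd d
       \<and> d dvd card (perm_group op)
       \<and> card (perm_group op) dvd d ^ CARD('n)"
proof -
  interpret finite_cycle_set_of_class op d
    by unfold_locales (fact assms)+
  show ?thesis
    by (intro conjI psi_w_factors_through_pi_w bij_op perm_order_diagT_dvd_class[OF assms(2)]
        class_dvd_card_perm_group card_perm_group_dvd_class_pow)
qed

end
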